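(* Let $K$ be a field, $f\colon R\to S$ a morphism of Zinbiel algebras, $N$ a positive integer, and $\Theta_t=\sum_{i=0}^N\theta_it^i$ a deformation of order $N$ of $f$. Then the obstruction class $\mathrm{Ob}_\Theta=(\mathrm{Ob}_R;\mathrm{Ob}_S;\mathrm{Ob}_f)\in C^3_{\mathrm{Zinb}}(f,f)$ is a $3$-cocycle, i.e. $d^3_f\,\mathrm{Ob}_\Theta=0$.
   Context: A Zinbiel algebra over $K$ is a $K$-vector space $R$ with bilinear product $x\cdot y$ (also written $m_R(x,y)$) satisfying $(x\cdot y)\cdot z=x\cdot(y\cdot z)+x\cdot(z\cdot y)$. A morphism $f\colon R\to S$ is a linear map with $f(x\cdot y)=f(x)\cdot f(y)$. $R$ is a bimodule over itself, $S$ over itself, and $S$ is an $R$-bimodule via $r\cdot s=f(r)\cdot s$, $s\cdot r=s\cdot f(r)$. For a bimodule $A$ over $R$ and $1\le n\le4$, $C^n_{\mathrm{Zinb}}(R,A)=\mathrm{Hom}_K(R^{\otimes n},A)$ with $(d^1\varphi)(x,y)=x\cdot\varphi(y)-\varphi(x\cdot y)+\varphi(x)\cdot y$, $(d^2\varphi)(x,y,z)=x\cdot(\varphi(y,z)+\varphi(z,y))-\varphi(x\cdot y,z)+\varphi(x,y\cdot z+z\cdot y)-\varphi(x,y)\cdot z$, $(d^3\varphi)(x,y,z,w)=x\cdot\{\varphi(y,z,w)-\varphi(z,w,y)+\varphi(z,y,w)-\varphi(w,z,y)\}-\varphi(x\cdot y,z,w)+\varphi(x,y\cdot z+z\cdot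 y,w)-\varphi(x,y,z\cdot w+w\cdot z)+\varphi(x,y,z)\cdot w$. The deformation complex: $C^0_{\mathrm{Zinb}}(R,S)=0$, $d^0=0$, $C^n_{\mathrm{Zinb}}(f,f)=C^n_{\mathrm{Zinb}}(R,R)\times C^n_{\mathrm{Zinb}}(S,S)\times C^{n-1}_{\mathrm{Zinb}}(R,S)$ ($1\le n\le4$), $d^i_f(\xi;\pi;\varphi)=(d^i\xi;d^i\pi;f\xi-\pi f-d^{i-1}\varphi)$ with $(f\xi)(x_1,\dots)=f(\xi(x_1,\dots))$, $(\pi f)(x_1,\dots)=\pi(f(x_1),\dots)$. A deformation of order $N$ of $f$ is $\Theta_t=\sum_{i=0}^N\theta_it^i$ with $\theta_0=(m_R;m_S;f)$ (so $m_{R,0}=m_R$, $m_{S,0}=m_S$, $f_0=f$) and $\theta_i=(m_{R,i};m_{S,i};f_i)\in C^2_{\mathrm{Zinb}}(f,f)$, such that for all $0\le n\le N$: for $*=R,S$ and all $x,y,z\in *$, $\sum_{l=0}^n m_{*,l}(m_{*,n-l}(x,y),z)=\sum_{l=0}^n m_{*,l}(x,m_{*,n-l}(y,z)+m_{*,n-l}(z,y))$; and for all $x,y\in R$, $\sum_{i=0}^n f_i(m_{R,n-i}(x,y))=\sum_{i+j+k=n}m_{S,i}(f_j(x),f_k(y))$ (indices $\ge0$). The obstruction class of such $\Theta_t$ is $\mathrm{Ob}_\Theta=(\mathrm{Ob}_R;\mathrm{Ob}_S;\mathrm{Ob}_f)$ where, for $*=R,S$ and $x,y,z\in *$, $\mathrm{Ob}_*(x,y,z)=\sum_{i=1}^N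 m_{*,i}(m_{*,N+1-i}(x,y),z)-\sum_{i=1}^N m_{*,i}(x,m_{*,N+1-i}(y,z)+m_{*,N+1-i}(z,y))$, and for $x,y\in R$, $\mathrm{Ob}_f(x,y)=\sum' m_{S,i}(f_j(x),f_k(y))-\sum_{i=1}^N f_i(m_{R,N+1-i}(x,y))$, where $\sum'$ runs over all triples of integers $i,j,k\ge0$ with $i+j+k=N+1$ and at least two of $i,j,k$ positive (equivalently, $i,j,k\le N$). *)

theory Defs
  imports Complex_Main
begin

definition bilin :: "('k::field \<Rightarrow> 'v::ab_group_add \<Rightarrow> 'v) \<Rightarrow> ('k \<Rightarrow> 'w::ab_group_add \<Rightarrow> 'w)
    \<Rightarrow> ('v \<Rightarrow> 'v \<Rightarrow> 'w) \<Rightarrow> bool" where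
  "bilin sV sW m \<longleftrightarrow> (\<forall>x. Vector_Spaces.linear sV sW (m x)) \<and> (\<forall>y. Vector_Spaces.linear sV sW (\<lambda>x. m x y))"

definition zinbiel_identity :: "('v::ab_group_add \<Rightarrow> 'v \<Rightarrow> 'v) \<Rightarrow> bool" where
  "zinbiel_identity m \<longleftrightarrow> (\<forall>x y z. m (m x y) z = m x (m y z) + m x (m z y))"

definition zinbiel_algebra :: "('k::field \<Rightarrow> 'v::ab_group_add \<Rightarrow> 'v) \<Rightarrow> ('v \<Rightarrow> 'v \<Rightarrow> 'v) \<Rightarrow> bool" where
  "zinbiel_algebra s m \<longleftrightarrow> vector_space s \<and> bilin s s m \<and> zinbiel_identity m"

definition zinbiel_morphism :: "('k::field \<Rightarrow> 'r::ab_group_add \<Rightarrow> 'r) \<Rightarrow> ('r \<Rightarrow> 'r \<Rightarrow> 'r)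
    \<Rightarrow> ('k \<Rightarrow> 's::ab_group_add \<Rightarrow> 's) \<Rightarrow> ('s \<Rightarrow> 's \<Rightarrow> 's) \<Rightarrow> ('r \<Rightarrow> 's) \<Rightarrow> bool" where
  "zinbiel_morphism sR mR sS mS f \<longleftrightarrow>
     zinbiel_algebra sR mR \<and> zinbiel_algebra sS mS \<and> Vector_Spaces.linear sR sS f \<and>
     (\<forall>x y. f (mR x y) = mS (f x) (f y))"

(* Coboundaries d^2, d^3 of C^*_Zinb(R, A), for a bimodule A over R given by the
   product mu of R, the left action lft and the right action rgt. *)
definition zd2 :: "('r::ab_group_add \<Rightarrow> 'r \<Rightarrow> 'r) \<Rightarrow> ('r \<Rightarrow> 'a \<Rightarrow> 'a) \<Rightarrow> ('a \<Rightarrow> 'r \<Rightarrow> 'a)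
    \<Rightarrow> ('r \<Rightarrow> 'r \<Rightarrow> 'a::ab_group_add) \<Rightarrow> 'r \<Rightarrow> 'r \<Rightarrow> 'r \<Rightarrow> 'a" where
  "zd2 mu lft rgt \<phi> x y z =
     lft x (\<phi> y z + \<phi> z y) - \<phi> (mu x y) z + \<phi> x (mu y z + mu z y) - rgt (\<phi> x y) z"

definition zd3 :: "('r::ab_group_add \<Rightarrow> 'r \<Rightarrow> 'r) \<Rightarrow> ('r \<Rightarrow> 'a \<Rightarrow> 'a) \<Rightarrow> ('a \<Rightarrow> 'r \<Rightarrow> 'a)
    \<Rightarrow> ('r \<Rightarrow> 'r \<Rightarrow> 'r \<Rightarrow> 'a::ab_group_add) \<Rightarrow> 'r \<Rightarrow> 'r \<Rightarrow> 'r \<Rightarrow> 'r \<Rightarrow> 'a" where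
  "zd3 mu lft rgt \<phi> x y z w =
     lft x (\<phi> y z w - \<phi> z w y + \<phi> z y w - \<phi> w z y) - \<phi> (mu x y) z w
     + \<phi> x (mu y z + mu z y) w - \<phi> x y (mu z w + mu w z) + rgt (\<phi> x y z) w"

definition zd3_f :: "('r::ab_group_add \<Rightarrow> 'r \<Rightarrow> 'r) \<Rightarrow> ('s::ab_group_add \<Rightarrow> 's \<Rightarrow> 's) \<Rightarrow> ('r \<Rightarrow> 's)
    \<Rightarrow> ('r \<Rightarrow> 'r \<Rightarrow> 'r \<Rightarrow> 'r) \<times> ('s \<Rightarrow> 's \<Rightarrow> 's \<Rightarrow> 's) \<times> ('r \<Rightarrow> 'r \<Rightarrow> 's)
    \<Rightarrow> ('r \<Rightarrow> 'r \<Rightarrow> 'r \<Rightarrow> 'r \<Rightarrow> 'r) \<times> ('s \<Rightarrow> 's \<Rightarrow> 's \<Rightarrow> 's \<Rightarrow> 's) \<times> ('r \<Rightarrow> 'r \<Rightarrow> 'r \<Rightarrow> 's)" where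
  "zd3_f mR mS f c = (case c of (\<xi>, \<pi>, \<phi>) \<Rightarrow>
     (zd3 mR mR mR \<xi>,
      zd3 mS mS mS \<pi>,
      (\<lambda>x y z. f (\<xi> x y z) - \<pi> (f x) (f y) (f z)
                - zd2 mR (\<lambda>r s. mS (f r) s) (\<lambda>s r. mS s (f r)) \<phi> x y z)))"

(* Deformation of order N of f : (R, mR 0) -> (S, mS 0), with theta_i = (mR i; mS i; fs i) *)
definition zinbiel_deformation :: "('k::field \<Rightarrow> 'r::ab_group_add \<Rightarrow> 'r) \<Rightarrow> ('k \<Rightarrow> 's::ab_group_add \<Rightarrow> 's)
    \<Rightarrow> nat \<Rightarrow> (nat \<Rightarrow> 'r \<Rightarrow> 'r \<Rightarrow> 'r) \<Rightarrow> (nat \<Rightarrow> 's \<Rightarrow> 's \<Rightarrow> 's) \<Rightarrow> (nat \<Rightarrow> 'r \<Rightarrow> 's) \<Rightarrow> bool" where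
  "zinbiel_deformation sR sS N mR mS fs \<longleftrightarrow>
     (\<forall>i\<le>N. bilin sR sR (mR i) \<and> bilin sS sS (mS i) \<and> Vector_Spaces.linear sR sS (fs i)) \<and>
     (\<forall>n\<le>N.
        (\<forall>x y z. (\<Sum>l=0..n. mR l (mR (n-l) x y) z) = (\<Sum>l=0..n. mR l x (mR (n-l) y z + mR (n-l) z y))) \<and>
        (\<forall>x y z. (\<Sum>l=0..n. mS l (mS (n-l) x y) z) = (\<Sum>l=0..n. mS l x (mS (n-l) y z + mS (n-l) z y))) \<and>
        (\<forall>x y. (\<Sum>i=0..n. fs i (mR (n-i) x y)) =
               (\<Sum>(i,j,k)\<in>{(i,j,k). i + j + k = n}. mS i (fs j x) (fs k y))))"

definition Ob_alg :: "nat \<Rightarrow> (nat \<Rightarrow> 'v \<Rightarrow> 'v \<Rightarrow> 'v::ab_group_add) \<Rightarrow> 'v \<Rightarrow> 'v \<Rightarrow> 'v \<Rightarrow> 'v" where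
  "Ob_alg N m x y z =
     (\<Sum>i=1..N. m i (m (N+1-i) x y) z) - (\<Sum>i=1..N. m i x (m (N+1-i) y z + m (N+1-i) z y))"

definition Ob_mor :: "nat \<Rightarrow> (nat \<Rightarrow> 'r::ab_group_add \<Rightarrow> 'r \<Rightarrow> 'r) \<Rightarrow> (nat \<Rightarrow> 's \<Rightarrow> 's \<Rightarrow> 's::ab_group_add)
    \<Rightarrow> (nat \<Rightarrow> 'r \<Rightarrow> 's) \<Rightarrow> 'r \<Rightarrow> 'r \<Rightarrow> 's" where
  "Ob_mor N mR mS fs x y =
     (\<Sum>(i,j,k)\<in>{(i,j,k). i + j + k = N + 1 \<and> i \<le> N \<and> j \<le> N \<and> k \<le> N}. mS i (fs j x) (fs k y))
     - (\<Sum>i=1..N. fs i (mR (N+1-i) x y))"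

definition Ob :: "nat \<Rightarrow> (nat \<Rightarrow> 'r \<Rightarrow> 'r \<Rightarrow> 'r::ab_group_add) \<Rightarrow> (nat \<Rightarrow> 's \<Rightarrow> 's \<Rightarrow> 's::ab_group_add)
    \<Rightarrow> (nat \<Rightarrow> 'r \<Rightarrow> 's) \<Rightarrow> ('r \<Rightarrow> 'r \<Rightarrow> 'r \<Rightarrow> 'r) \<times> ('s \<Rightarrow> 's \<Rightarrow> 's \<Rightarrow> 's) \<times> ('r \<Rightarrow> 'r \<Rightarrow> 's)" where
  "Ob N mR mS fs = (Ob_alg N mR, Ob_alg N mS, Ob_mor N mR mS fs)"

end

theory Submission
  imports Defs "HOL-Library.Function_Algebras"
begin

text \<open>A sequence \<open>X :: nat \<Rightarrow> V\<close> stands for the formal power series \<open>\<Sum> X\<^sub>n t\<^sup>n\<close>.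
  A family \<open>m\<^sub>0, \<dots>, m\<^sub>N\<close> of biadditive products defines the \<open>t\<close>-bilinear product
  \<open>M = \<Sum> m\<^sub>i t\<^sup>i\<close> on series (\<open>series_prod\<close>), a family \<open>f\<^sub>0, \<dots>, f\<^sub>N\<close> of additive maps the
  \<open>t\<close>-linear map \<open>F = \<Sum> f\<^sub>i t\<^sup>i\<close> (\<open>series_map\<close>), and multiplication by \<open>t\<close> is \<open>shift\<close>.

  For a biadditive product \<open>\<mu>\<close> the Zinbiel associator \<open>A\<^sub>\<mu>\<close> satisfies \<open>d\<^sup>3 A\<^sub>\<mu> = 0\<close>, and for
  an additive \<open>g\<close> the defect \<open>E(x, y) = g (\<mu> x y) - \<nu> (g x) (g y)\<close> satisfies
  \<open>d\<^sup>2 E = A\<^sub>\<nu> \<circ> g - g \<circ> A\<^sub>\<mu>\<close>; both are formal identities. Apply them to the products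
  \<open>M\<^sub>R\<close>, \<open>M\<^sub>S\<close> and the map \<open>F\<close> of the deformation, truncated at \<open>N\<close>. The deformation
  equations say that the associators and \<open>E\<close> vanish in degrees \<open>\<le> N\<close> on constant series, hence,
  by \<open>t\<close>-linearity, on all series, and that their coefficients of degree \<open>N + 1\<close> on constants
  are \<open>Ob\<^sub>R\<close>, \<open>Ob\<^sub>S\<close> and \<open>-Ob\<^sub>f\<close>. In degree \<open>N + 1\<close> of the two identities only the constant
  terms \<open>m\<^sub>0\<close>, \<open>f\<^sub>0\<close> of the other factors survive, and what remains is \<open>d\<^sup>3\<^sub>f Ob = 0\<close>.\<close>

locale biadditive =
  fixes mu :: "'a::ab_group_add \<Rightarrow> 'b::ab_group_add \<Rightarrow> 'c::ab_group_add"
  assumes add_left: "mu (x + x') y = mu x y + mu x' y"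
    and add_right: "mu x (y + y') = mu x y + mu x y'"
begin

lemma additive_left: "additive (\<lambda>x. mu x y)"
  by unfold_locales (rule add_left)

lemma additive_right: "additive (mu x)"
  by unfold_locales (rule add_right)

lemma zero_left [simp]: "mu 0 y = 0"
  using additive.zero[OF additive_left] .

lemma zero_right [simp]: "mu x 0 = 0"
  using additive.zero[OF additive_right] .

lemma minus_left: "mu (- x) y = - mu x y"
  using additive.minus[OF additive_left] .

lemma minus_right: "mu x (- y) = - mu x y"
  using additive.minus[OF additive_right] .

lemma diff_left: "mu (x - y) z = mu x z - mu y z"
  using additive.diff[OF additive_left] .

lemma diff_right: "mu x (y - z) = mu x y - mu x z"
  using additive.diff[OF additive_right] .

lemmas distribs = add_left add_right minus_left minus_right diff_left diff_right

end

lemma biadditive_zero: "biadditive 0"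
  by unfold_locales simp_all

lemma linear_imp_additive: "Vector_Spaces.linear s1 s2 f \<Longrightarrow> additive f"
  by (simp add: additive_def module_hom_iff_linear[symmetric] module_hom.add)

lemma bilin_imp_biadditive: "bilin s1 s2 m \<Longrightarrow> biadditive m"
  unfolding bilin_def
  by unfold_locales (metis additive.add linear_imp_additive)+

definition zinbiel_associator ::
    "('v::ab_group_add \<Rightarrow> 'v \<Rightarrow> 'v) \<Rightarrow> 'v \<Rightarrow> 'v \<Rightarrow> 'v \<Rightarrow> 'v" where
  "zinbiel_associator mu x y z = mu (mu x y) z - mu x (mu y z + mu z y)"

definition hom_defect ::
    "('r \<Rightarrow> 'r \<Rightarrow> 'r) \<Rightarrow> ('s \<Rightarrow> 's \<Rightarrow> 's::minus) \<Rightarrow> ('r \<Rightarrow> 's) \<Rightarrow> 'r \<Rightarrow> 'r \<Rightarrow> 's" where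
  "hom_defect mu nu g x y = g (mu x y) - nu (g x) (g y)"

lemma zd3_zinbiel_associator:
  assumes "biadditive mu"
  shows "zd3 mu mu mu (zinbiel_associator mu) x y z w = 0"
  unfolding zd3_def zinbiel_associator_def
  by (simp add: biadditive.distribs[OF assms] algebra_simps)

lemma zd2_hom_defect:
  assumes "biadditive mu" and "biadditive nu" and "additive g"
  shows "zd2 mu (\<lambda>a b. nu (g a) b) (\<lambda>b a. nu b (g a)) (hom_defect mu nu g) x y z
    = zinbiel_associator nu (g x) (g y) (g z) - g (zinbiel_associator mu x y z)"
  unfolding zd2_def zinbiel_associator_def hom_defect_def
  by (simp add: biadditive.distribs[OF assms(1)] biadditive.distribs[OF assms(2)]
      additive.add[OF assms(3)] additive.diff[OF assms(3)] algebra_simps)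

fun shift :: "(nat \<Rightarrow> 'a::zero) \<Rightarrow> nat \<Rightarrow> 'a" where
  "shift X 0 = 0"
| "shift X (Suc n) = X n"

definition const_series :: "'a::zero \<Rightarrow> nat \<Rightarrow> 'a" where
  "const_series u n = (if n = 0 then u else 0)"

definition series_prod ::
    "(nat \<Rightarrow> 'a \<Rightarrow> 'b \<Rightarrow> 'c::comm_monoid_add) \<Rightarrow> (nat \<Rightarrow> 'a) \<Rightarrow> (nat \<Rightarrow> 'b) \<Rightarrow> nat \<Rightarrow> 'c" where
  "series_prod m X Y n = (\<Sum>(a,b,c)\<in>{(a,b,c). a + b + c = n}. m a (X b) (Y c))"

definition series_map :: "(nat \<Rightarrow> 'a \<Rightarrow> 'b::comm_monoid_add) \<Rightarrow> (nat \<Rightarrow> 'a) \<Rightarrow> nat \<Rightarrow> 'b" where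
  "series_map f X n = (\<Sum>l=0..n. f l (X (n - l)))"

definition series_linear ::
    "((nat \<Rightarrow> 'a::ab_group_add) \<Rightarrow> nat \<Rightarrow> 'b::ab_group_add) \<Rightarrow> bool" where
  "series_linear \<Phi> \<longleftrightarrow> additive \<Phi> \<and> (\<forall>X. \<Phi> (shift X) = shift (\<Phi> X))"

lemma const_series_0 [simp]: "const_series u 0 = u"
  by (simp add: const_series_def)

lemma additive_shift: "additive (shift :: (nat \<Rightarrow> 'a::ab_group_add) \<Rightarrow> nat \<Rightarrow> 'a)"
proof
  fix X Y :: "nat \<Rightarrow> 'a"
  show "shift (X + Y) = shift X + shift Y"
  proof
    fix n show "shift (X + Y) n = (shift X + shift Y) n"
      by (cases n) simp_all
  qed
qed

lemma shift_add: "shift (X + Y) = shift X + shift (Y :: nat \<Rightarrow> 'a::ab_group_add)"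
  by (rule additive.add[OF additive_shift])

lemma shift_diff: "shift (X - Y) = shift X - shift (Y :: nat \<Rightarrow> 'a::ab_group_add)"
  by (rule additive.diff[OF additive_shift])

lemma series_linear_decompose:
  assumes "series_linear \<Phi>"
  shows "\<Phi> X = \<Phi> (const_series (X 0)) + shift (\<Phi> (\<lambda>n. X (Suc n)))"
proof -
  have "X n = (const_series (X 0) + shift (\<lambda>n. X (Suc n))) n" for n
    by (cases n) (simp_all add: const_series_def)
  then have "X = const_series (X 0) + shift (\<lambda>n. X (Suc n))" ..
  then show ?thesis
    using assms unfolding series_linear_def by (metis additive.add)
qed

lemma series_linear_coeff_eq_0:
  assumes "series_linear \<Phi>" and "\<And>u q. q \<le> N \<Longrightarrow> \<Phi> (const_series u) q = 0"
    and "q \<le> N"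
  shows "\<Phi> X q = 0"
  using assms(3)
proof (induction q arbitrary: X)
  case 0
  then show ?case
    using series_linear_decompose[OF assms(1), of X] assms(2) by simp
next
  case (Suc q)
  then show ?case
    using series_linear_decompose[OF assms(1), of X] assms(2) by simp
qed

lemma series_linear_coeff_Suc:
  assumes "series_linear \<Phi>" and "\<And>u q. q \<le> N \<Longrightarrow> \<Phi> (const_series u) q = 0"
  shows "\<Phi> X (Suc N) = \<Phi> (const_series (X 0)) (Suc N)"
  using series_linear_decompose[OF assms(1), of X] series_linear_coeff_eq_0[OF assms, of N]
  by simp

lemma series_linear2_coeffs:
  assumes lin1: "\<And>Y. series_linear (\<lambda>X. \<Phi> X Y)" and lin2: "\<And>X. series_linear (\<Phi> X)"
    and const: "\<And>u v q. q \<le> N \<Longrightarrow> \<Phi> (const_series u) (const_series v) q = 0"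
  shows series_linear2_coeff_eq_0: "q \<le> N \<Longrightarrow> \<Phi> X Y q = 0"
    and series_linear2_coeff_Suc:
      "\<Phi> X Y (Suc N) = \<Phi> (const_series (X 0)) (const_series (Y 0)) (Suc N)"
proof -
  have const1: "\<Phi> (const_series u) Y q = 0" if "q \<le> N" for u Y q
    using series_linear_coeff_eq_0[OF lin2 const that] .
  show "q \<le> N \<Longrightarrow> \<Phi> X Y q = 0"
    by (rule series_linear_coeff_eq_0[OF lin1 const1])
  show "\<Phi> X Y (Suc N) = \<Phi> (const_series (X 0)) (const_series (Y 0)) (Suc N)"
  proof -
    have "\<Phi> X Y (Suc N) = \<Phi> (const_series (X 0)) Y (Suc N)"
      by (rule series_linear_coeff_Suc[OF lin1 const1])
    also have "\<dots> = \<Phi> (const_series (X 0)) (const_series (Y 0)) (Suc N)"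
      by (rule series_linear_coeff_Suc[OF lin2 const])
    finally show ?thesis .
  qed
qed

lemma series_linear3_coeffs:
  assumes lin1: "\<And>Y Z. series_linear (\<lambda>X. \<Phi> X Y Z)"
    and lin2: "\<And>X Z. series_linear (\<lambda>Y. \<Phi> X Y Z)" and lin3: "\<And>X Y. series_linear (\<Phi> X Y)"
    and const: "\<And>u v w q. q \<le> N \<Longrightarrow>
      \<Phi> (const_series u) (const_series v) (const_series w) q = 0"
  shows series_linear3_coeff_eq_0: "q \<le> N \<Longrightarrow> \<Phi> X Y Z q = 0"
    and series_linear3_coeff_Suc: "\<Phi> X Y Z (Suc N) =
      \<Phi> (const_series (X 0)) (const_series (Y 0)) (const_series (Z 0)) (Suc N)"
proof -
  have const1: "\<Phi> (const_series u) Y Z q = 0" if "q \<le> N" for u Y Z q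
    using series_linear2_coeff_eq_0[OF lin2 lin3 const that] .
  show "q \<le> N \<Longrightarrow> \<Phi> X Y Z q = 0"
    by (rule series_linear_coeff_eq_0[OF lin1 const1])
  show "\<Phi> X Y Z (Suc N) =
      \<Phi> (const_series (X 0)) (const_series (Y 0)) (const_series (Z 0)) (Suc N)"
  proof -
    have "\<Phi> X Y Z (Suc N) = \<Phi> (const_series (X 0)) Y Z (Suc N)"
      by (rule series_linear_coeff_Suc[OF lin1 const1])
    also have "\<dots> = \<Phi> (const_series (X 0)) (const_series (Y 0)) (const_series (Z 0)) (Suc N)"
      by (rule series_linear2_coeff_Suc[OF lin2 lin3 const])
    finally show ?thesis .
  qed
qed


lemma finite_triples: "finite {(a, b, c). a + b + c = (n::nat)}"
proof (rule finite_subset)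
  show "{(a, b, c). a + b + c = n} \<subseteq> {..n} \<times> {..n} \<times> {..n}"
    by auto
qed simp

lemma sum_triples_shift:
  assumes "\<And>a c. g a 0 c = 0"
  shows "(\<Sum>(a,b,c)\<in>{(a,b,c). a + b + c = Suc n}. g a b c)
    = (\<Sum>(a,b,c)\<in>{(a,b,c). a + b + c = n}. g a (Suc b) c)"
proof -
  have "(\<Sum>(a,b,c)\<in>{(a,b,c). a + b + c = Suc n}. g a b c)
      = (\<Sum>(a,b,c)\<in>{(a,b,c). a + b + c = Suc n \<and> b \<noteq> 0}. g a b c)"
    using assms by (intro sum.mono_neutral_right[OF finite_triples]) (auto intro!: gr0I)
  also have "\<dots> = (\<Sum>(a,b,c)\<in>{(a,b,c). a + b + c = n}. g a (Suc b) c)"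
    by (rule sum.reindex_bij_witness[where i="\<lambda>(a,b,c). (a, Suc b, c)"
          and j="\<lambda>(a,b,c). (a, b - 1, c)"]) auto
  finally show ?thesis .
qed

lemma sum_triples_middle_0:
  assumes "\<And>a b c. b \<noteq> 0 \<Longrightarrow> g a b c = 0"
  shows "(\<Sum>(a,b,c)\<in>{(a,b,c). a + b + c = (n::nat)}. g a b c) = (\<Sum>l=0..n. g l 0 (n - l))"
proof -
  have "(\<Sum>(a,b,c)\<in>{(a,b,c). a + b + c = n}. g a b c)
      = (\<Sum>(a,b,c)\<in>{(a,b,c). a + b + c = n \<and> b = 0}. g a b c)"
    by (rule sum.mono_neutral_right[OF finite_triples]) (auto intro: assms)
  also have "\<dots> = (\<Sum>l=0..n. g l 0 (n - l))"
    by (rule sum.reindex_bij_witness[where i="\<lambda>l. (l, 0, n - l)" and j="\<lambda>(a,b,c). a"]) auto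
  finally show ?thesis .
qed

lemma sum_triples_single:
  assumes "\<And>a b c. a + b + c = n \<Longrightarrow> (a, b, c) \<noteq> (a0, b0, c0) \<Longrightarrow> g a b c = 0"
    and "a0 + b0 + c0 = (n::nat)"
  shows "(\<Sum>(a,b,c)\<in>{(a,b,c). a + b + c = n}. g a b c) = g a0 b0 c0"
proof -
  have "(\<Sum>(a,b,c)\<in>{(a,b,c). a + b + c = n}. g a b c) = (\<Sum>(a,b,c)\<in>{(a0,b0,c0)}. g a b c)"
    using assms(2) by (intro sum.mono_neutral_right[OF finite_triples]) (auto intro: assms(1))
  then show ?thesis by simp
qed

lemma series_prod_flip: "series_prod m X Y = series_prod (\<lambda>i y x. m i x y) Y X"
  unfolding series_prod_def fun_eq_iff
  by (auto intro!: sum.reindex_bij_witness[where i="\<lambda>(a,b,c). (a,c,b)" and j="\<lambda>(a,b,c). (a,c,b)"])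

lemma biadditive_flip: "biadditive m \<Longrightarrow> biadditive (\<lambda>y x. m x y)"
  unfolding biadditive_def by auto

lemma biadditive_series_prod:
  assumes "\<And>i. biadditive (m i)"
  shows "biadditive (series_prod m)"
  by unfold_locales
    (simp_all add: series_prod_def fun_eq_iff biadditive.distribs[OF assms] sum.distrib split_def)

lemma series_prod_shift_left:
  assumes "\<And>i. biadditive (m i)"
  shows "series_prod m (shift X) Y = shift (series_prod m X Y)"
proof
  fix n show "series_prod m (shift X) Y n = shift (series_prod m X Y) n"
    by (cases n) (simp_all add: series_prod_def sum_triples_shift biadditive.zero_left[OF assms])
qed

lemma series_prod_shift_right:
  assumes "\<And>i. biadditive (m i)"
  shows "series_prod m X (shift Y) = shift (series_prod m X Y)"
  using series_prod_shift_left[OF biadditive_flip[OF assms]] by (simp add: series_prod_flip[of m])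

lemma series_prod_coeff_0: "series_prod m X Y 0 = m 0 (X 0) (Y 0)"
  unfolding series_prod_def by (subst sum_triples_single[of 0 0 0 0]) auto

lemma series_prod_const_left:
  assumes "\<And>i. biadditive (m i)"
  shows "series_prod m (const_series u) Y n = (\<Sum>l=0..n. m l u (Y (n - l)))"
  unfolding series_prod_def
  by (subst sum_triples_middle_0) (auto simp: const_series_def biadditive.zero_left[OF assms])

lemma series_prod_const_right:
  assumes "\<And>i. biadditive (m i)"
  shows "series_prod m X (const_series v) n = (\<Sum>l=0..n. m l (X (n - l)) v)"
  using series_prod_const_left[OF biadditive_flip[OF assms]] by (simp add: series_prod_flip[of m])

lemma series_prod_const_const:
  assumes "\<And>i. biadditive (m i)"
  shows "series_prod m (const_series u) (const_series v) = (\<lambda>n. m n u v)"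
proof
  fix n
  have "(\<Sum>l=0..n. m l u (const_series v (n - l))) = (\<Sum>l=0..n. if l = n then m n u v else 0)"
    by (rule sum.cong) (auto simp: const_series_def biadditive.zero_right[OF assms])
  then show "series_prod m (const_series u) (const_series v) n = m n u v"
    by (simp add: series_prod_const_left[OF assms])
qed

lemma series_prod_coeff_Suc_left:
  assumes "\<And>i. biadditive (m i)" and "\<And>q. q \<le> N \<Longrightarrow> W q = 0"
  shows "series_prod m W Y (Suc N) = m 0 (W (Suc N)) (Y 0)"
  unfolding series_prod_def
  using assms by (subst sum_triples_single[of "Suc N" 0 "Suc N" 0]) (auto simp: biadditive.zero_left)

lemma series_prod_coeff_Suc_right:
  assumes "\<And>i. biadditive (m i)" and "\<And>q. q \<le> N \<Longrightarrow> W q = 0"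
  shows "series_prod m X W (Suc N) = m 0 (X 0) (W (Suc N))"
  using series_prod_coeff_Suc_left[OF biadditive_flip[OF assms(1)] assms(2)]
  by (simp add: series_prod_flip[of m])

lemma additive_series_map:
  assumes "\<And>i. additive (f i)"
  shows "additive (series_map f)"
  by unfold_locales (simp add: series_map_def fun_eq_iff additive.add[OF assms] sum.distrib)

lemma series_map_shift:
  assumes "\<And>i. additive (f i)"
  shows "series_map f (shift X) = shift (series_map f X)"
proof
  fix n show "series_map f (shift X) n = shift (series_map f X) n"
  proof (cases n)
    case 0
    then show ?thesis by (simp add: series_map_def additive.zero[OF assms])
  next
    case (Suc k)
    have "series_map f (shift X) (Suc k) = (\<Sum>l=0..k. f l (shift X (Suc k - l)))"
      by (simp add: series_map_def additive.zero[OF assms])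
    also have "\<dots> = series_map f X k"
      unfolding series_map_def by (rule sum.cong) (simp_all add: Suc_diff_le)
    finally show ?thesis by (simp add: Suc)
  qed
qed

lemma series_map_coeff_0: "series_map f X 0 = f 0 (X 0)"
  by (simp add: series_map_def)

lemma series_map_const:
  assumes "\<And>i. additive (f i)"
  shows "series_map f (const_series u) = (\<lambda>n. f n u)"
proof
  fix n
  have "series_map f (const_series u) n = (\<Sum>l=0..n. if l = n then f n u else 0)"
    unfolding series_map_def
    by (rule sum.cong) (auto simp: const_series_def additive.zero[OF assms])
  then show "series_map f (const_series u) n = f n u" by simp
qed

lemma series_map_coeff_Suc:
  assumes "\<And>i. additive (f i)" and "\<And>q. q \<le> N \<Longrightarrow> W q = 0"
  shows "series_map f W (Suc N) = f 0 (W (Suc N))"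
proof -
  have "series_map f W (Suc N) = (\<Sum>l=0..Suc N. if l = 0 then f 0 (W (Suc N)) else 0)"
    unfolding series_map_def
    by (rule sum.cong) (auto simp: assms(2) additive.zero[OF assms(1)])
  then show ?thesis by simp
qed

lemma series_linear_zinbiel_associator:
  assumes "\<And>i. biadditive (m i)"
  shows "series_linear (\<lambda>X. zinbiel_associator (series_prod m) X Y Z)"
    and "series_linear (\<lambda>Y. zinbiel_associator (series_prod m) X Y Z)"
    and "series_linear (\<lambda>Z. zinbiel_associator (series_prod m) X Y Z)"
  by (simp_all add: series_linear_def additive_def zinbiel_associator_def
      biadditive.distribs[OF biadditive_series_prod[OF assms]]
      series_prod_shift_left[OF assms] series_prod_shift_right[OF assms] shift_add shift_diff
      algebra_simps)

lemma series_linear_hom_defect: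
  assumes "\<And>i. biadditive (r i)" and "\<And>i. biadditive (s i)" and "\<And>i. additive (f i)"
  shows "series_linear (\<lambda>X. hom_defect (series_prod r) (series_prod s) (series_map f) X Y)"
    and "series_linear (hom_defect (series_prod r) (series_prod s) (series_map f) X)"
  by (simp_all add: series_linear_def additive_def hom_defect_def
      biadditive.distribs[OF biadditive_series_prod[OF assms(1)]]
      biadditive.distribs[OF biadditive_series_prod[OF assms(2)]]
      additive.add[OF additive_series_map[OF assms(3)]] additive.diff[OF additive_series_map[OF assms(3)]]
      series_prod_shift_left[OF assms(1)] series_prod_shift_right[OF assms(1)]
      series_prod_shift_left[OF assms(2)] series_prod_shift_right[OF assms(2)]
      series_map_shift[OF assms(3)] shift_add shift_diff
      algebra_simps)

lemma zinbiel_associator_series_const: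
  assumes "\<And>i. biadditive (m i)"
  shows "zinbiel_associator (series_prod m) (const_series x) (const_series y) (const_series z) n
    = (\<Sum>l=0..n. m l (m (n - l) x y) z) - (\<Sum>l=0..n. m l x (m (n - l) y z + m (n - l) z y))"
  by (simp add: zinbiel_associator_def series_prod_const_right[OF assms]
      series_prod_const_left[OF assms] series_prod_const_const[OF assms])

lemma hom_defect_series_const:
  assumes "\<And>i. biadditive (r i)" and "\<And>i. additive (f i)"
  shows "hom_defect (series_prod r) (series_prod s) (series_map f) (const_series x) (const_series y) n
    = (\<Sum>l=0..n. f l (r (n - l) x y))
      - (\<Sum>(a,b,c)\<in>{(a,b,c). a + b + c = n}. s a (f b x) (f c y))"
  by (simp add: hom_defect_def series_prod_const_const[OF assms(1)] series_map_const[OF assms(2)]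
      series_map_def series_prod_def)

definition truncation :: "nat \<Rightarrow> (nat \<Rightarrow> 'a::zero) \<Rightarrow> nat \<Rightarrow> 'a" where
  "truncation N m i = (if i \<le> N then m i else 0)"

lemma truncation_le [simp]: "i \<le> N \<Longrightarrow> truncation N m i = m i"
  by (simp add: truncation_def)

lemma truncation_gt [simp]: "N < i \<Longrightarrow> truncation N m i = 0"
  by (simp add: truncation_def)

lemma sum_atLeast0_atMost_Suc_drop_ends:
  fixes g :: "nat \<Rightarrow> 'a::comm_monoid_add"
  assumes "g 0 = 0" and "g (Suc N) = 0"
  shows "(\<Sum>l=0..Suc N. g l) = (\<Sum>l=1..N. g l)"
  using assms by (simp add: sum.atLeast_Suc_atMost)

locale zinbiel_product_deformation =
  fixes N :: nat and m :: "nat \<Rightarrow> 'v::ab_group_add \<Rightarrow> 'v \<Rightarrow> 'v"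
  assumes biadditive: "i \<le> N \<Longrightarrow> biadditive (m i)"
    and zinbiel: "n \<le> N \<Longrightarrow>
      (\<Sum>l=0..n. m l (m (n - l) x y) z) = (\<Sum>l=0..n. m l x (m (n - l) y z + m (n - l) z y))"
begin

lemma biadditive_truncation: "biadditive (truncation N m i)"
  by (simp add: truncation_def biadditive biadditive_zero)

abbreviation associator :: "(nat \<Rightarrow> 'v) \<Rightarrow> (nat \<Rightarrow> 'v) \<Rightarrow> (nat \<Rightarrow> 'v) \<Rightarrow> nat \<Rightarrow> 'v" where
  "associator \<equiv> zinbiel_associator (series_prod (truncation N m))"

lemma associator_const_coeff_eq_0:
  assumes "q \<le> N"
  shows "associator (const_series x) (const_series y) (const_series z) q = 0"
  using assms zinbiel[OF assms, of x y z]
  by (simp add: zinbiel_associator_series_const[OF biadditive_truncation])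

lemma associator_const_coeff_Suc:
  "associator (const_series x) (const_series y) (const_series z) (Suc N) = Ob_alg N m x y z"
proof -
  let ?t = "truncation N m"
  have "(\<Sum>l=0..Suc N. ?t l (?t (Suc N - l) x y) z) = (\<Sum>l=1..N. m l (m (N + 1 - l) x y) z)"
    by (subst sum_atLeast0_atMost_Suc_drop_ends)
      (auto intro!: sum.cong simp: biadditive.zero_left[OF biadditive])
  moreover have "(\<Sum>l=0..Suc N. ?t l x (?t (Suc N - l) y z + ?t (Suc N - l) z y))
      = (\<Sum>l=1..N. m l x (m (N + 1 - l) y z + m (N + 1 - l) z y))"
    by (subst sum_atLeast0_atMost_Suc_drop_ends)
      (auto intro!: sum.cong simp: biadditive.zero_right[OF biadditive])
  ultimately show ?thesis
    by (simp add: zinbiel_associator_series_const[OF biadditive_truncation] Ob_alg_def)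
qed

lemma associator_coeff_eq_0: "q \<le> N \<Longrightarrow> associator X Y Z q = 0"
  by (rule series_linear3_coeff_eq_0[OF series_linear_zinbiel_associator[OF biadditive_truncation]
        associator_const_coeff_eq_0])

lemma associator_coeff_Suc: "associator X Y Z (Suc N) = Ob_alg N m (X 0) (Y 0) (Z 0)"
  by (simp add: series_linear3_coeff_Suc[OF series_linear_zinbiel_associator[OF biadditive_truncation]
        associator_const_coeff_eq_0] associator_const_coeff_Suc)

lemma Ob_alg_cocycle: "zd3 (m 0) (m 0) (m 0) (Ob_alg N m) x y z w = 0"
proof -
  let ?M = "series_prod (truncation N m)" and ?c = const_series
  have "zd3 ?M ?M ?M associator (?c x) (?c y) (?c z) (?c w) (Suc N) = 0"
    by (simp add: zd3_zinbiel_associator[OF biadditive_series_prod[OF biadditive_truncation]])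
  then show ?thesis
    by (simp add: zd3_def associator_coeff_Suc associator_coeff_eq_0 series_prod_coeff_0
        series_prod_coeff_Suc_left[OF biadditive_truncation]
        series_prod_coeff_Suc_right[OF biadditive_truncation])
qed

end

locale zinbiel_morphism_deformation =
  R: zinbiel_product_deformation N r + S: zinbiel_product_deformation N s
  for N :: nat and r :: "nat \<Rightarrow> 'r::ab_group_add \<Rightarrow> 'r \<Rightarrow> 'r"
    and s :: "nat \<Rightarrow> 's::ab_group_add \<Rightarrow> 's \<Rightarrow> 's" +
  fixes f :: "nat \<Rightarrow> 'r \<Rightarrow> 's"
  assumes additive: "i \<le> N \<Longrightarrow> additive (f i)"
    and hom: "n \<le> N \<Longrightarrow>
      (\<Sum>i=0..n. f i (r (n - i) x y)) = (\<Sum>(i,j,k)\<in>{(i,j,k). i + j + k = n}. s i (f j x) (f k y))"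
begin

lemma additive_truncation: "additive (truncation N f i)"
proof (cases "i \<le> N")
  case False
  then show ?thesis by unfold_locales simp
qed (simp add: additive)

abbreviation defect :: "(nat \<Rightarrow> 'r) \<Rightarrow> (nat \<Rightarrow> 'r) \<Rightarrow> nat \<Rightarrow> 's" where
  "defect \<equiv> hom_defect (series_prod (truncation N r)) (series_prod (truncation N s))
    (series_map (truncation N f))"

lemma series_linear_defect: "series_linear (\<lambda>X. defect X Y)" "series_linear (defect X)"
  by (rule series_linear_hom_defect[OF R.biadditive_truncation S.biadditive_truncation
        additive_truncation])+

lemma defect_const_coeff_eq_0:
  assumes "q \<le> N"
  shows "defect (const_series x) (const_series y) q = 0"
proof -
  let ?s = "truncation N s" and ?f = "truncation N f"
  have "(\<Sum>(a,b,c)\<in>{(a,b,c). a + b + c = q}. ?s a (?f b x) (?f c y))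
      = (\<Sum>(a,b,c)\<in>{(a,b,c). a + b + c = q}. s a (f b x) (f c y))"
    using assms by (intro sum.cong) auto
  then show ?thesis
    using assms hom[OF assms, of x y]
    by (simp add: hom_defect_series_const[OF R.biadditive_truncation additive_truncation])
qed

lemma defect_const_coeff_Suc:
  "defect (const_series x) (const_series y) (Suc N) = - Ob_mor N r s f x y"
proof -
  let ?r = "truncation N r" and ?s = "truncation N s" and ?f = "truncation N f"
  have "(\<Sum>l=0..Suc N. ?f l (?r (Suc N - l) x y)) = (\<Sum>l=1..N. f l (r (N + 1 - l) x y))"
    by (subst sum_atLeast0_atMost_Suc_drop_ends)
      (auto intro!: sum.cong simp: additive.zero[OF additive])
  moreover have "(\<Sum>(a,b,c)\<in>{(a,b,c). a + b + c = Suc N}. ?s a (?f b x) (?f c y))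
      = (\<Sum>(a,b,c)\<in>{(a,b,c). a + b + c = N + 1 \<and> a \<le> N \<and> b \<le> N \<and> c \<le> N}.
          s a (f b x) (f c y))"
    by (rule sum.mono_neutral_cong_right[OF finite_triples])
      (auto simp: truncation_def biadditive.zero_left[OF S.biadditive]
        biadditive.zero_right[OF S.biadditive] split: if_splits)
  ultimately show ?thesis
    by (simp add: hom_defect_series_const[OF R.biadditive_truncation additive_truncation] Ob_mor_def)
qed

lemma defect_coeff_eq_0: "q \<le> N \<Longrightarrow> defect X Y q = 0"
  by (rule series_linear2_coeff_eq_0[OF series_linear_defect defect_const_coeff_eq_0])

lemma defect_coeff_Suc: "defect X Y (Suc N) = - Ob_mor N r s f (X 0) (Y 0)"
  by (simp add: series_linear2_coeff_Suc[OF series_linear_defect defect_const_coeff_eq_0]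
      defect_const_coeff_Suc)

lemma Ob_mor_cocycle:
  "f 0 (Ob_alg N r x y z) - Ob_alg N s (f 0 x) (f 0 y) (f 0 z)
    - zd2 (r 0) (\<lambda>a b. s 0 (f 0 a) b) (\<lambda>b a. s 0 b (f 0 a)) (Ob_mor N r s f) x y z = 0"
proof -
  let ?R = "series_prod (truncation N r)" and ?S = "series_prod (truncation N s)"
    and ?F = "series_map (truncation N f)" and ?c = const_series
  have "zd2 ?R (\<lambda>a b. ?S (?F a) b) (\<lambda>b a. ?S b (?F a)) defect (?c x) (?c y) (?c z) (Suc N)
      = (S.associator (?F (?c x)) (?F (?c y)) (?F (?c z))
          - ?F (R.associator (?c x) (?c y) (?c z))) (Suc N)"
    by (simp add: zd2_hom_defect biadditive_series_prod R.biadditive_truncation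
        S.biadditive_truncation additive_series_map additive_truncation)
  then show ?thesis
    by (simp add: zd2_def defect_coeff_Suc defect_coeff_eq_0 series_prod_coeff_0 series_map_coeff_0
        R.associator_coeff_Suc S.associator_coeff_Suc R.associator_coeff_eq_0
        series_prod_coeff_Suc_left[OF S.biadditive_truncation]
        series_prod_coeff_Suc_right[OF S.biadditive_truncation]
        series_map_coeff_Suc[OF additive_truncation]
        biadditive.distribs[OF S.biadditive[OF le0]] algebra_simps)
qed

end

lemma zinbiel_deformation_imp_morphism_deformation:
  assumes "zinbiel_deformation sR sS N mR mS fs"
  shows "zinbiel_morphism_deformation N mR mS fs"
  using assms
  unfolding zinbiel_deformation_def zinbiel_morphism_deformation_def
    zinbiel_morphism_deformation_axioms_def zinbiel_product_deformation_def
  by (auto simp: bilin_imp_biadditive linear_imp_additive)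

theorem lemma5p1:
  fixes sR :: "'k::field \<Rightarrow> 'r::ab_group_add \<Rightarrow> 'r"
    and sS :: "'k \<Rightarrow> 's::ab_group_add \<Rightarrow> 's"
    and m_R :: "'r \<Rightarrow> 'r \<Rightarrow> 'r" and m_S :: "'s \<Rightarrow> 's \<Rightarrow> 's" and f :: "'r \<Rightarrow> 's"
    and N :: nat
    and mR :: "nat \<Rightarrow> 'r \<Rightarrow> 'r \<Rightarrow> 'r" and mS :: "nat \<Rightarrow> 's \<Rightarrow> 's \<Rightarrow> 's" and fs :: "nat \<Rightarrow> 'r \<Rightarrow> 's"
  assumes "zinbiel_morphism sR m_R sS m_S f"
    and "N > 0"
    and "mR 0 = m_R" and "mS 0 = m_S" and "fs 0 = f"
    and "zinbiel_deformation sR sS N mR mS fs"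
  shows "zd3_f m_R m_S f (Ob N mR mS fs) = (\<lambda>x y z w. 0, \<lambda>x y z w. 0, \<lambda>x y z. 0)"
proof -
  interpret zinbiel_morphism_deformation N mR mS fs
    using assms(6) by (rule zinbiel_deformation_imp_morphism_deformation)
  show ?thesis
    unfolding assms(3-5)[symmetric]
    by (simp add: zd3_f_def Ob_def fun_eq_iff R.Ob_alg_cocycle S.Ob_alg_cocycle Ob_mor_cocycle)
qed

end
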